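(* Let $N\ge 1$, $\lambda$ a parameter, and for $x,p\in\mathbb{C}^N$ set $$L_k(x,p;\lambda)=\begin{pmatrix}-x_k & x_k(\lambda+x_k)+e^{p_k}\\ -1 & \lambda+x_k\end{pmatrix},\qquad T_N(x,p;\lambda)=L_N(x,p;\lambda)\cdots L_1(x,p;\lambda).$$ If $\widetilde{x}\in\mathbb{C}^N$ satisfies $e^{p_k}=(\widetilde{x}_k-x_k)(\lambda+x_k-\widetilde{x}_{k-1})$ for $k=1,\dots,N$, with periodic boundary conditions ($\widetilde x_0=\widetilde x_N$, $x_{N+1}=x_1$), then $\prod_{k=1}^N(\lambda+x_{k+1}-\widetilde{x}_k)$ is an eigenvalue of $T_N(x,p;\lambda)$.
   Context: The relation between $(x,p)$ and $\widetilde x$ is the first half of the Bäcklund transformation $F_\lambda$ of the periodic dual Toda lattice $\ddot x_k=\dot x_k(x_{k+1}-2x_k+x_{k-1})$. *)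

theory Defs
  imports Complex_Main "Jordan_Normal_Form.Char_Poly"
begin

text \<open>Lax matrix L_k(x,p;lambda); vectors x, p are indexed 1..N as functions nat => complex.\<close>
definition Lmat :: "(nat \<Rightarrow> complex) \<Rightarrow> (nat \<Rightarrow> complex) \<Rightarrow> complex \<Rightarrow> nat \<Rightarrow> complex mat" where
  "Lmat x p lam k = mat_of_rows_list 2
     [[- x k, x k * (lam + x k) + exp (p k)],
      [-1, lam + x k]]"

fun Tmat :: "(nat \<Rightarrow> complex) \<Rightarrow> (nat \<Rightarrow> complex) \<Rightarrow> complex \<Rightarrow> nat \<Rightarrow> complex mat" where
  "Tmat x p lam 0 = 1\<^sub>m 2"
| "Tmat x p lam (Suc k) = Lmat x p lam (Suc k) * Tmat x p lam k"

end

theory Submission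
  imports Defs
begin

text \<open>The relation defining xt says precisely that L_k maps the vector (xt_{k-1}, 1) to
  (lam + x_k - xt_{k-1}) times (xt_k, 1). Chaining these steps, T_N maps (xt_0, 1) to the product
  of the factors times (xt_N, 1), so periodicity xt_0 = xt_N makes (xt_0, 1) an eigenvector, and
  x_{N+1} = x_1 turns the product into the stated one by a cyclic shift.\<close>

lemma prod_cyclic_shift:
  fixes f :: "nat \<Rightarrow> 'a::comm_monoid_mult"
  assumes "f 0 = f N"
  shows "(\<Prod>k=1..N. f (k - 1)) = (\<Prod>k=1..N. f k)"
proof (cases N)
  case (Suc M)
  have "(\<Prod>k=1..N. f (k - 1)) = (\<Prod>k<N. f k)"
    by (simp add: prod.atLeast1_atMost_eq)
  also have "\<dots> = f 0 * (\<Prod>k<M. f (Suc k))"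
    unfolding Suc by (rule prod.lessThan_Suc_shift)
  also have "\<dots> = (\<Prod>k=1..N. f k)"
    using Suc assms by (simp add: prod.atLeast1_atMost_eq mult.commute)
  finally show ?thesis .
qed simp

definition hom_vec :: "complex \<Rightarrow> complex vec" where
  "hom_vec a = vec 2 (\<lambda>i. if i = 0 then a else 1)"

lemma hom_vec_carrier: "hom_vec a \<in> carrier_vec 2"
  by (simp add: hom_vec_def)

lemma hom_vec_nonzero: "hom_vec a \<noteq> 0\<^sub>v 2"
proof
  assume "hom_vec a = 0\<^sub>v 2"
  then have "hom_vec a $ 1 = 0\<^sub>v 2 $ 1" by simp
  then show False by (simp add: hom_vec_def)
qed

lemma Lmat_carrier: "Lmat x p lam k \<in> carrier_mat 2 2"
  unfolding Lmat_def mat_of_rows_list_def by (simp only: mat_carrier numeral_2_eq_2 list.size) simp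

lemma Tmat_carrier: "Tmat x p lam k \<in> carrier_mat 2 2"
proof (induction k)
  case (Suc k)
  then show ?case using mult_carrier_mat[OF Lmat_carrier Suc.IH] by simp
qed simp

lemma Lmat_mult_hom_vec:
  assumes "exp (p k) = (b - x k) * (lam + x k - a)"
  shows "Lmat x p lam k *\<^sub>v hom_vec a = (lam + x k - a) \<cdot>\<^sub>v hom_vec b"
proof (rule eq_vecI)
  fix i assume "i < dim_vec ((lam + x k - a) \<cdot>\<^sub>v hom_vec b)"
  then have "i = 0 \<or> i = 1" by (auto simp: hom_vec_def)
  then show "(Lmat x p lam k *\<^sub>v hom_vec a) $ i = ((lam + x k - a) \<cdot>\<^sub>v hom_vec b) $ i"
    by (auto simp: Lmat_def mat_of_rows_list_def hom_vec_def mult_mat_vec_def scalar_prod_def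
        assms algebra_simps numeral_2_eq_2)
qed (simp add: Lmat_def mat_of_rows_list_def hom_vec_def)

lemma Tmat_mult_hom_vec:
  assumes "\<And>j. 1 \<le> j \<Longrightarrow> j \<le> n \<Longrightarrow>
             exp (p j) = (xt j - x j) * (lam + x j - xt (j - 1))"
  shows "Tmat x p lam n *\<^sub>v hom_vec (xt 0) = (\<Prod>j=1..n. lam + x j - xt (j - 1)) \<cdot>\<^sub>v hom_vec (xt n)"
  using assms
proof (induction n)
  case 0
  then show ?case by (simp add: hom_vec_carrier)
next
  case (Suc k)
  have "Tmat x p lam (Suc k) *\<^sub>v hom_vec (xt 0)
        = Lmat x p lam (Suc k) *\<^sub>v (Tmat x p lam k *\<^sub>v hom_vec (xt 0))"
    by (simp add: assoc_mult_mat_vec[OF Lmat_carrier Tmat_carrier hom_vec_carrier])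
  also have "\<dots> = (\<Prod>j=1..k. lam + x j - xt (j - 1)) \<cdot>\<^sub>v (Lmat x p lam (Suc k) *\<^sub>v hom_vec (xt k))"
    using Suc by (simp add: mult_mat_vec[OF Lmat_carrier hom_vec_carrier])
  also have "\<dots> = (\<Prod>j=1..Suc k. lam + x j - xt (j - 1)) \<cdot>\<^sub>v hom_vec (xt (Suc k))"
    using Lmat_mult_hom_vec[where k = "Suc k" and a = "xt k" and b = "xt (Suc k)"] Suc.prems[of "Suc k"]
    by (simp add: smult_smult_assoc mult.commute)
  finally show ?case .
qed

theorem theorem6:
  fixes N :: nat and lam :: complex and x p xt :: "nat \<Rightarrow> complex"
  assumes "N \<ge> 1"
    and "xt 0 = xt N" and "x (N + 1) = x 1"
    and "\<And>k. 1 \<le> k \<Longrightarrow> k \<le> N \<Longrightarrow>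
           exp (p k) = (xt k - x k) * (lam + x k - xt (k - 1))"
  shows "eigenvalue (Tmat x p lam N) (\<Prod>k=1..N. lam + x (k + 1) - xt k)"
proof -
  let ?f = "\<lambda>k. lam + x (k + 1) - xt k"
  have "(\<Prod>j=1..N. lam + x j - xt (j - 1)) = (\<Prod>k=1..N. ?f (k - 1))"
    by (rule prod.cong) auto
  also have "\<dots> = (\<Prod>k=1..N. ?f k)"
    using assms(2,3) by (intro prod_cyclic_shift) simp
  finally have "Tmat x p lam N *\<^sub>v hom_vec (xt 0) = (\<Prod>k=1..N. ?f k) \<cdot>\<^sub>v hom_vec (xt 0)"
    using Tmat_mult_hom_vec[of N p xt x lam, OF assms(4)] assms(2) by simp
  then show ?thesis
    unfolding eigenvalue_def eigenvector_def
    using Tmat_carrier[of x p lam N] hom_vec_carrier[of "xt 0"] hom_vec_nonzero[of "xt 0"]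
    by auto
qed

end
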